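(* Let $n\ge0$, $a_{n,0},\dots,a_{n,n}\in\mathbb C$, and let $P_n(z)=\sum_{r=0}^n b_{n,r}z^r$ be the associated polynomial. Then all coefficients $b_{n,r}$ are real if and only if $a_{n,k}=\overline{a_{n,n-k}}$ for all $0\le k\le n$ (bar denoting complex conjugation).
   Context: $\imath=\sqrt{-1}$. $\mathcal{A}$ denotes the quotient of the free associative $\mathbb{C}$-algebra on two noncommuting generators $p,q$ by the two-sided ideal generated by $qp-pq-\imath$, and $z=\tfrac12(qp+pq)\in\mathcal A$. For $n\ge0$ and complex numbers $a_{n,0},\dots,a_{n,n}$, there is a unique polynomial $P_n\in\mathbb{C}[X]$ of degree at most $n$ with $\sum_{k=0}^n a_{n,k}q^kp^nq^{n-k}=P_n(z)$ in $\mathcal A$; it is called the polynomial associated to $\{a_{n,k}\}$. *)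

theory Defs
  imports "HOL-Computational_Algebra.Polynomial"
begin

text \<open>The free associative C-algebra on two generators p, q: an element is a
coefficient function on words (lists of letters; False = p, True = q) with finite support.\<close>

type_synonym fa = "bool list \<Rightarrow> complex"

definition free_alg :: "fa set" where
  "free_alg = {f. finite {w. f w \<noteq> 0}}"

definition fa_mul :: "fa \<Rightarrow> fa \<Rightarrow> fa" where
  "fa_mul f g = (\<lambda>w. \<Sum>k\<le>length w. f (take k w) * g (drop k w))"

definition fa_const :: "complex \<Rightarrow> fa" where
  "fa_const c = (\<lambda>w. if w = [] then c else 0)"

definition fa_p :: fa where "fa_p = (\<lambda>w. if w = [False] then 1 else 0)"
definition fa_q :: fa where "fa_q = (\<lambda>w. if w = [True] then 1 else 0)"

definition fa_pow :: "fa \<Rightarrow> nat \<Rightarrow> fa" where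
  "fa_pow f n = ((fa_mul f) ^^ n) (fa_const 1)"

definition weyl_rel :: fa where
  "weyl_rel = (\<lambda>w. fa_mul fa_q fa_p w - fa_mul fa_p fa_q w - fa_const \<i> w)"

inductive_set weyl_ideal :: "fa set" where
  gen: "weyl_rel \<in> weyl_ideal"
| zero: "(\<lambda>w. 0) \<in> weyl_ideal"
| add: "x \<in> weyl_ideal \<Longrightarrow> y \<in> weyl_ideal \<Longrightarrow> (\<lambda>w. x w + y w) \<in> weyl_ideal"
| lmul: "a \<in> free_alg \<Longrightarrow> x \<in> weyl_ideal \<Longrightarrow> fa_mul a x \<in> weyl_ideal"
| rmul: "a \<in> free_alg \<Longrightarrow> x \<in> weyl_ideal \<Longrightarrow> fa_mul x a \<in> weyl_ideal"

definition weyl_eq :: "fa \<Rightarrow> fa \<Rightarrow> bool" where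
  "weyl_eq x y \<longleftrightarrow> (\<lambda>w. x w - y w) \<in> weyl_ideal"

definition weyl_z :: fa where
  "weyl_z = (\<lambda>w. (fa_mul fa_q fa_p w + fa_mul fa_p fa_q w) / 2)"

definition poly_at_z :: "complex poly \<Rightarrow> fa" where
  "poly_at_z P = (\<lambda>w. \<Sum>r\<le>degree P. coeff P r * fa_pow weyl_z r w)"

definition weyl_sum :: "nat \<Rightarrow> (nat \<Rightarrow> complex) \<Rightarrow> fa" where
  "weyl_sum n a = (\<lambda>w. \<Sum>k\<le>n. a k *
      fa_mul (fa_mul (fa_pow fa_q k) (fa_pow fa_p n)) (fa_pow fa_q (n - k)) w)"

definition is_assoc_poly :: "nat \<Rightarrow> (nat \<Rightarrow> complex) \<Rightarrow> complex poly \<Rightarrow> bool" where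
  "is_assoc_poly n a P \<longleftrightarrow> degree P \<le> n \<and> weyl_eq (weyl_sum n a) (poly_at_z P)"

end

theory Submission
  imports Defs
begin

text \<open>Let q act on coefficient sequences of power series in X as multiplication by X and p as
\<open>-\<i> d/dX\<close>.  This kills the relator \<open>qp - pq - \<i>\<close>, so identities in the quotient algebra become
identities of operators.  On \<open>X^j\<close> the element z acts by the scalar \<open>-\<i>(j + 1/2)\<close>, and
\<open>q^k p^n q^(n-k)\<close> acts by \<open>B(n,k)\<close> evaluated at that scalar, where \<open>B(n,k) = monomial_poly n k\<close> is
an explicit product of n linear factors.  Since these scalars are pairwise distinct,
\<open>P = \<Sum>k\<le>n. a k B(n,k)\<close>.  Conjugating the coefficients of \<open>B(n,k)\<close> gives \<open>B(n,n-k)\<close>, and the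
\<open>B(n,k)\<close> are linearly independent because \<open>B(n,k)\<close> vanishes at the eigenvalue of \<open>X^j\<close> for
\<open>j < k\<close> but not at that of \<open>X^k\<close>.\<close>

subsection \<open>Action of the free algebra on power series\<close>

definition q_op :: "(nat \<Rightarrow> complex) \<Rightarrow> nat \<Rightarrow> complex" where
  "q_op c = (\<lambda>j. if j = 0 then 0 else c (j - 1))"

definition p_op :: "(nat \<Rightarrow> complex) \<Rightarrow> nat \<Rightarrow> complex" where
  "p_op c = (\<lambda>j. - \<i> * of_nat (Suc j) * c (Suc j))"

fun word_act :: "bool list \<Rightarrow> (nat \<Rightarrow> complex) \<Rightarrow> nat \<Rightarrow> complex" where
  "word_act [] c = c"
| "word_act (b # w) c = (if b then q_op else p_op) (word_act w c)"

lemma word_act_sum: "word_act w (\<lambda>j. \<Sum>x\<in>A. g x j) = (\<lambda>j. \<Sum>x\<in>A. word_act w (g x) j)"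
  by (induction w) (auto simp: q_op_def p_op_def fun_eq_iff sum_distrib_left)

lemma word_act_scale: "word_act w (\<lambda>j. \<alpha> * g j) = (\<lambda>j. \<alpha> * word_act w g j)"
  by (induction w) (auto simp: q_op_def p_op_def fun_eq_iff)

lemma word_act_zero: "word_act w (\<lambda>j. 0) = (\<lambda>j. 0)"
  using word_act_scale[of w 0 "\<lambda>j. 0"] by simp

lemma word_act_append: "word_act (u @ v) c = word_act u (word_act v c)"
  by (induction u) auto

definition fa_supp :: "fa \<Rightarrow> bool list set" where
  "fa_supp f = {w. f w \<noteq> 0}"

lemma free_alg_iff_finite_supp: "f \<in> free_alg \<longleftrightarrow> finite (fa_supp f)"
  by (simp add: free_alg_def fa_supp_def)

definition fa_act :: "fa \<Rightarrow> (nat \<Rightarrow> complex) \<Rightarrow> nat \<Rightarrow> complex" where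
  "fa_act f c j = (\<Sum>w\<in>fa_supp f. f w * word_act w c j)"

lemma fa_act_eq_sum_superset:
  "finite A \<Longrightarrow> fa_supp f \<subseteq> A \<Longrightarrow> fa_act f c j = (\<Sum>w\<in>A. f w * word_act w c j)"
  unfolding fa_act_def by (rule sum.mono_neutral_left) (auto simp: fa_supp_def)

lemma fa_supp_mul: "fa_supp (fa_mul f g) \<subseteq> (\<lambda>(u, v). u @ v) ` (fa_supp f \<times> fa_supp g)"
proof
  fix w assume "w \<in> fa_supp (fa_mul f g)"
  then obtain k where "f (take k w) * g (drop k w) \<noteq> 0"
    by (metis (mono_tags, lifting) fa_mul_def fa_supp_def mem_Collect_eq sum.neutral)
  then have "(take k w, drop k w) \<in> fa_supp f \<times> fa_supp g"
    by (simp add: fa_supp_def)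
  then show "w \<in> (\<lambda>(u, v). u @ v) ` (fa_supp f \<times> fa_supp g)"
    by (metis (no_types, lifting) append_take_drop_id case_prod_conv image_eqI)
qed

lemma free_alg_mul [simp]: "f \<in> free_alg \<Longrightarrow> g \<in> free_alg \<Longrightarrow> fa_mul f g \<in> free_alg"
  unfolding free_alg_iff_finite_supp by (rule finite_subset[OF fa_supp_mul]) auto

lemma free_alg_pointwise [simp]:
  "x \<in> free_alg \<Longrightarrow> y \<in> free_alg \<Longrightarrow> h 0 0 = 0 \<Longrightarrow> (\<lambda>w. h (x w) (y w)) \<in> free_alg"
  unfolding free_alg_iff_finite_supp
  by (rule finite_subset[of _ "fa_supp x \<union> fa_supp y"]) (auto simp: fa_supp_def)

lemma free_alg_add [simp]: "x \<in> free_alg \<Longrightarrow> y \<in> free_alg \<Longrightarrow> (\<lambda>w. x w + y w) \<in> free_alg"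
  using free_alg_pointwise[of x y "(+)"] by simp

lemma free_alg_diff [simp]: "x \<in> free_alg \<Longrightarrow> y \<in> free_alg \<Longrightarrow> (\<lambda>w. x w - y w) \<in> free_alg"
  using free_alg_pointwise[of x y "(-)"] by simp

lemma free_alg_scale [simp]: "x \<in> free_alg \<Longrightarrow> (\<lambda>w. \<alpha> * x w) \<in> free_alg"
  using free_alg_pointwise[of x x "\<lambda>a _. \<alpha> * a"] by simp

lemma free_alg_divide [simp]: "x \<in> free_alg \<Longrightarrow> (\<lambda>w. x w / \<alpha>) \<in> free_alg"
  using free_alg_pointwise[of x x "\<lambda>a _. a / \<alpha>"] by simp

lemma free_alg_sum [simp]:
  "(\<And>k. k \<in> A \<Longrightarrow> F k \<in> free_alg) \<Longrightarrow> (\<lambda>w. \<Sum>k\<in>A. F k w) \<in> free_alg"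
proof (induction A rule: infinite_finite_induct)
  case (infinite A)
  then show ?case by (simp add: free_alg_def)
next
  case empty
  then show ?case by (simp add: free_alg_def)
next
  case (insert k A)
  then show ?case using free_alg_add[of "F k" "\<lambda>w. \<Sum>k\<in>A. F k w"] by simp
qed

lemma free_alg_const [simp]: "fa_const \<alpha> \<in> free_alg"
  unfolding free_alg_iff_finite_supp fa_supp_def fa_const_def by (rule finite_subset[of _ "{[]}"]) auto

lemma free_alg_p [simp]: "fa_p \<in> free_alg"
  unfolding free_alg_iff_finite_supp fa_supp_def fa_p_def by (rule finite_subset[of _ "{[False]}"]) auto

lemma free_alg_q [simp]: "fa_q \<in> free_alg"
  unfolding free_alg_iff_finite_supp fa_supp_def fa_q_def by (rule finite_subset[of _ "{[True]}"]) auto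

lemma free_alg_pow [simp]: "f \<in> free_alg \<Longrightarrow> fa_pow f n \<in> free_alg"
  by (induction n) (simp_all add: fa_pow_def)

lemma free_alg_weyl_z [simp]: "weyl_z \<in> free_alg"
  by (simp add: weyl_z_def)

lemma free_alg_poly_at_z [simp]: "poly_at_z P \<in> free_alg"
  by (simp add: poly_at_z_def)

lemma free_alg_weyl_sum [simp]: "weyl_sum n a \<in> free_alg"
  by (simp add: weyl_sum_def)

subsection \<open>The action is an algebra homomorphism\<close>

lemma sum_over_splittings:
  fixes F :: "'a list \<Rightarrow> 'a list \<Rightarrow> 'b::comm_monoid_add"
  assumes "finite S" "finite T" and "\<And>u v. F u v \<noteq> 0 \<Longrightarrow> u \<in> S \<and> v \<in> T"
  shows "(\<Sum>w\<in>(\<lambda>(u, v). u @ v) ` (S \<times> T). \<Sum>k\<le>length w. F (take k w) (drop k w))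
           = (\<Sum>(u, v)\<in>S \<times> T. F u v)"
proof -
  define split :: "'a list \<times> nat \<Rightarrow> 'a list \<times> 'a list"
    where "split = (\<lambda>(w, k). (take k w, drop k w))"
  define W where "W = Sigma ((\<lambda>(u, v). u @ v) ` (S \<times> T)) (\<lambda>w. {..length w})"
  have "finite W"
    using assms(1,2) by (simp add: W_def)
  have "inj_on split W"
  proof (rule inj_onI)
    fix x y assume "x \<in> W" "y \<in> W" "split x = split y"
    then obtain w k w' k' where "x = (w, k)" "k \<le> length w" "y = (w', k')" "k' \<le> length w'"
      and "take k w = take k' w'" "drop k w = drop k' w'"
      by (cases x, cases y) (auto simp: W_def split_def)
    then show "x = y"
      by (metis append_take_drop_id length_take min.absorb2)
  qed
  have "S \<times> T \<subseteq> split ` W"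
  proof
    fix p assume "p \<in> S \<times> T"
    then obtain u v where "p = (u, v)" "u \<in> S" "v \<in> T" by auto
    then have "(u @ v, length u) \<in> W" "split (u @ v, length u) = p"
      by (auto simp: W_def split_def)
    then show "p \<in> split ` W" by force
  qed
  have "(\<Sum>w\<in>(\<lambda>(u, v). u @ v) ` (S \<times> T). \<Sum>k\<le>length w. F (take k w) (drop k w))
          = (\<Sum>x\<in>W. case_prod F (split x))"
    unfolding W_def split_def using assms(1,2) by (subst sum.Sigma) (auto simp: case_prod_unfold)
  also have "\<dots> = (\<Sum>p\<in>split ` W. case_prod F p)"
    using \<open>inj_on split W\<close> by (simp add: sum.reindex)
  also have "\<dots> = (\<Sum>p\<in>S \<times> T. case_prod F p)"
    using \<open>finite W\<close> \<open>S \<times> T \<subseteq> split ` W\<close> assms(3)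
    by (intro sum.mono_neutral_right) auto
  finally show ?thesis .
qed

lemma fa_act_mul:
  assumes "f \<in> free_alg" "g \<in> free_alg"
  shows "fa_act (fa_mul f g) c = fa_act f (fa_act g c)"
proof
  fix j
  define S where "S = fa_supp f"
  define T where "T = fa_supp g"
  have fin: "finite S" "finite T"
    using assms by (simp_all add: S_def T_def free_alg_iff_finite_supp)
  have act_g: "fa_act g c = (\<lambda>j. \<Sum>v\<in>T. g v * word_act v c j)"
    by (simp add: fun_eq_iff fa_act_def T_def)
  have "fa_act (fa_mul f g) c j
          = (\<Sum>w\<in>(\<lambda>(u, v). u @ v) ` (S \<times> T). fa_mul f g w * word_act w c j)"
    using fin fa_supp_mul[of f g] by (intro fa_act_eq_sum_superset) (auto simp: S_def T_def)
  also have "\<dots> = (\<Sum>w\<in>(\<lambda>(u, v). u @ v) ` (S \<times> T). \<Sum>k\<le>length w.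
                     f (take k w) * g (drop k w) * word_act (take k w @ drop k w) c j)"
    by (simp add: fa_mul_def sum_distrib_right)
  also have "\<dots> = (\<Sum>(u, v)\<in>S \<times> T. f u * g v * word_act (u @ v) c j)"
    using fin by (intro sum_over_splittings) (auto simp: S_def T_def fa_supp_def)
  also have "\<dots> = (\<Sum>u\<in>S. \<Sum>v\<in>T. f u * (g v * word_act u (word_act v c) j))"
    by (simp add: sum.cartesian_product word_act_append mult.assoc)
  also have "\<dots> = fa_act f (fa_act g c) j"
    by (simp add: fa_act_def S_def act_g word_act_sum word_act_scale sum_distrib_left)
  finally show "fa_act (fa_mul f g) c j = fa_act f (fa_act g c) j" .
qed

lemma fa_act_eq_sum_union:
  assumes "x \<in> free_alg" "y \<in> free_alg" "\<And>w. x w = 0 \<Longrightarrow> y w = 0 \<Longrightarrow> f w = 0"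
  shows "fa_act f c j = (\<Sum>w\<in>fa_supp x \<union> fa_supp y. f w * word_act w c j)"
  using assms by (intro fa_act_eq_sum_superset) (auto simp: free_alg_iff_finite_supp fa_supp_def)

lemma fa_act_add:
  assumes "x \<in> free_alg" "y \<in> free_alg"
  shows "fa_act (\<lambda>w. x w + y w) c j = fa_act x c j + fa_act y c j"
  using fa_act_eq_sum_union[OF assms, of "\<lambda>w. x w + y w"] fa_act_eq_sum_union[OF assms, of x]
    fa_act_eq_sum_union[OF assms, of y]
  by (simp add: sum.distrib distrib_right)

lemma fa_act_diff:
  assumes "x \<in> free_alg" "y \<in> free_alg"
  shows "fa_act (\<lambda>w. x w - y w) c j = fa_act x c j - fa_act y c j"
  using fa_act_eq_sum_union[OF assms, of "\<lambda>w. x w - y w"] fa_act_eq_sum_union[OF assms, of x]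
    fa_act_eq_sum_union[OF assms, of y]
  by (simp add: sum_subtractf left_diff_distrib)

lemma fa_act_scale:
  assumes "x \<in> free_alg"
  shows "fa_act (\<lambda>w. \<alpha> * x w) c j = \<alpha> * fa_act x c j"
  using fa_act_eq_sum_union[OF assms assms, of "\<lambda>w. \<alpha> * x w"] fa_act_eq_sum_union[OF assms assms, of x]
  by (simp add: sum_distrib_left mult.assoc)

lemma fa_act_divide: "x \<in> free_alg \<Longrightarrow> fa_act (\<lambda>w. x w / \<alpha>) c j = fa_act x c j / \<alpha>"
  using fa_act_scale[of x "inverse \<alpha>"] by (simp add: field_simps)

lemma fa_act_zero: "fa_act (\<lambda>w. 0) c j = 0"
  by (simp add: fa_act_def fa_supp_def)

lemma fa_act_sum:
  "(\<And>k. k \<in> A \<Longrightarrow> F k \<in> free_alg) \<Longrightarrow>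
     fa_act (\<lambda>w. \<Sum>k\<in>A. F k w) c j = (\<Sum>k\<in>A. fa_act (F k) c j)"
  by (induction A rule: infinite_finite_induct) (simp_all add: fa_act_zero fa_act_add)

lemma fa_act_const: "fa_act (fa_const \<alpha>) c j = \<alpha> * c j"
proof -
  have "fa_supp (fa_const \<alpha>) \<subseteq> {[]}"
    by (simp add: fa_supp_def fa_const_def subset_iff)
  then show ?thesis
    using fa_act_eq_sum_superset[of "{[]}"] by (simp add: fa_const_def)
qed

lemma fa_act_p: "fa_act fa_p = p_op"
  using fa_act_eq_sum_superset[of "{[False]}" fa_p] by (simp add: fa_p_def fa_supp_def fun_eq_iff)

lemma fa_act_q: "fa_act fa_q = q_op"
  using fa_act_eq_sum_superset[of "{[True]}" fa_q] by (simp add: fa_q_def fa_supp_def fun_eq_iff)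

lemma fa_act_pow: "f \<in> free_alg \<Longrightarrow> fa_act (fa_pow f n) c = (fa_act f ^^ n) c"
proof (induction n arbitrary: c)
  case 0
  then show ?case by (simp add: fa_pow_def fa_act_const fun_eq_iff)
next
  case (Suc n)
  have "fa_pow f (Suc n) = fa_mul f (fa_pow f n)"
    by (simp add: fa_pow_def)
  then have "fa_act (fa_pow f (Suc n)) c = fa_act f (fa_act (fa_pow f n) c)"
    using Suc.prems by (simp add: fa_act_mul)
  then show ?case by (simp add: Suc)
qed

lemma fa_act_weyl_ideal: "x \<in> weyl_ideal \<Longrightarrow> x \<in> free_alg \<and> fa_act x c = (\<lambda>j. 0)"
proof (induction arbitrary: c rule: weyl_ideal.induct)
  case gen
  have "fa_act weyl_rel c j = 0" for j
  proof -
    have "fa_act weyl_rel c j = q_op (p_op c) j - p_op (q_op c) j - \<i> * c j"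
      by (simp add: weyl_rel_def fa_act_diff fa_act_mul fa_act_p fa_act_q fa_act_const)
    also have "\<dots> = 0"
      by (cases j) (simp_all add: q_op_def p_op_def algebra_simps)
    finally show ?thesis .
  qed
  then show ?case
    by (simp add: weyl_rel_def fun_eq_iff)
next
  case zero
  show ?case by (simp add: free_alg_def fun_eq_iff fa_act_zero)
next
  case (add x y)
  then show ?case by (simp add: fa_act_add fun_eq_iff)
next
  case (lmul a x)
  then have "fa_act (fa_mul a x) c = fa_act a (\<lambda>j. 0)"
    by (simp add: fa_act_mul)
  with lmul show ?case
    by (simp add: fun_eq_iff fa_act_def word_act_zero)
next
  case (rmul a x)
  then show ?case by (simp add: fa_act_mul fun_eq_iff)
qed

subsection \<open>Eigenvalues on monomials\<close>

definition z_eigenvalue :: "nat \<Rightarrow> complex" where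
  "z_eigenvalue j = - \<i> * (of_nat j + 1/2)"

lemma inj_z_eigenvalue: "inj z_eigenvalue"
  by (rule injI) (simp add: z_eigenvalue_def)

lemma fa_act_weyl_z: "fa_act weyl_z c j = z_eigenvalue j * c j"
proof -
  have "fa_act weyl_z c j = (q_op (p_op c) j + p_op (q_op c) j) / 2"
    by (simp add: weyl_z_def fa_act_divide fa_act_add fa_act_mul fa_act_p fa_act_q)
  also have "\<dots> = z_eigenvalue j * c j"
    by (cases j) (simp_all add: q_op_def p_op_def z_eigenvalue_def field_simps)
  finally show ?thesis .
qed

lemma fa_act_poly_at_z: "fa_act (poly_at_z P) c j = poly P (z_eigenvalue j) * c j"
proof -
  have "(fa_act weyl_z ^^ r) c = (\<lambda>j. z_eigenvalue j ^ r * c j)" for r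
    by (induction r) (simp_all add: fa_act_weyl_z fun_eq_iff)
  then show ?thesis
    by (simp add: poly_at_z_def fa_act_sum fa_act_scale fa_act_pow poly_altdef
        sum_distrib_right mult.assoc)
qed

definition monomial_poly :: "nat \<Rightarrow> nat \<Rightarrow> complex poly" where
  "monomial_poly n k = (\<Prod>m\<in>{1..n}. [:\<i> * (1/2 + of_nat k - of_nat m), 1:])"

lemma poly_monomial_poly:
  "poly (monomial_poly n k) x = (\<Prod>m\<in>{1..n}. \<i> * (1/2 + of_nat k - of_nat m) + x)"
  by (simp add: monomial_poly_def poly_prod)

lemma poly_monomial_poly_z_eigenvalue:
  "poly (monomial_poly n k) (z_eigenvalue j) = (\<Prod>m\<in>{1..n}. - \<i> * (of_nat j - of_nat k + of_nat m))"
  unfolding poly_monomial_poly z_eigenvalue_def by (rule prod.cong) (auto simp: algebra_simps)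

lemma monomial_poly_vanishes_below:
  "j < k \<Longrightarrow> k \<le> n \<Longrightarrow> poly (monomial_poly n k) (z_eigenvalue j) = 0"
  unfolding poly_monomial_poly_z_eigenvalue
  by (rule prod_zero) (auto intro!: bexI[of _ "k - j"] simp: of_nat_diff)

lemma monomial_poly_nonzero_diagonal: "poly (monomial_poly n k) (z_eigenvalue k) \<noteq> 0"
  by (simp add: poly_monomial_poly_z_eigenvalue)

lemma q_op_pow: "(q_op ^^ k) c j = (if k \<le> j then c (j - k) else 0)"
  by (induction k arbitrary: j) (auto simp: q_op_def)

lemma p_op_pow: "(p_op ^^ n) c j = (\<Prod>m\<in>{1..n}. - \<i> * (of_nat j + of_nat m)) * c (j + n)"
proof (induction n arbitrary: c)
  case 0
  then show ?case by simp
next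
  case (Suc n)
  have "(p_op ^^ Suc n) c j = (p_op ^^ n) (p_op c) j"
    by (simp only: funpow_Suc_right comp_apply)
  also have "\<dots> = (\<Prod>m\<in>{1..Suc n}. - \<i> * (of_nat j + of_nat m)) * c (j + Suc n)"
    by (simp add: Suc p_op_def atLeastAtMostSuc_conv algebra_simps)
  finally show ?case .
qed

lemma fa_act_weyl_monomial:
  assumes "k \<le> n"
  shows "fa_act (fa_mul (fa_mul (fa_pow fa_q k) (fa_pow fa_p n)) (fa_pow fa_q (n - k))) c j
           = poly (monomial_poly n k) (z_eigenvalue j) * c j"
proof (cases "k \<le> j")
  case True
  then show ?thesis using assms
    by (simp add: fa_act_mul fa_act_pow fa_act_p fa_act_q q_op_pow p_op_pow
        poly_monomial_poly_z_eigenvalue of_nat_diff)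
next
  case False
  then show ?thesis using assms
    by (simp add: fa_act_mul fa_act_pow fa_act_p fa_act_q q_op_pow monomial_poly_vanishes_below)
qed

lemma poly_eq_if_agree_on_infinite:
  fixes p q :: "'a::idom poly"
  assumes "infinite A" "\<And>x. x \<in> A \<Longrightarrow> poly p x = poly q x"
  shows "p = q"
proof (rule ccontr)
  assume "p \<noteq> q"
  then have "finite {x. poly (p - q) x = 0}"
    by (intro poly_roots_finite) simp
  moreover have "A \<subseteq> {x. poly (p - q) x = 0}"
    using assms(2) by auto
  ultimately show False
    using assms(1) finite_subset by blast
qed

lemma assoc_poly_expansion:
  assumes "is_assoc_poly n a P"
  shows "P = (\<Sum>k\<le>n. smult (a k) (monomial_poly n k))"
proof (rule poly_eq_if_agree_on_infinite)
  show "infinite (range z_eigenvalue)"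
    using inj_z_eigenvalue range_inj_infinite by blast
next
  fix x assume "x \<in> range z_eigenvalue"
  then obtain j where x: "x = z_eigenvalue j" by blast
  have "(\<lambda>w. weyl_sum n a w - poly_at_z P w) \<in> weyl_ideal"
    using assms by (simp add: is_assoc_poly_def weyl_eq_def)
  then have "fa_act (\<lambda>w. weyl_sum n a w - poly_at_z P w) (\<lambda>_. 1) j = 0"
    by (simp add: fa_act_weyl_ideal)
  then show "poly P x = poly (\<Sum>k\<le>n. smult (a k) (monomial_poly n k)) x"
    by (simp add: x fa_act_diff weyl_sum_def fa_act_sum fa_act_scale fa_act_weyl_monomial
        fa_act_poly_at_z poly_sum)
qed

lemma map_poly_cnj_monomial_poly:
  assumes "k \<le> n"
  shows "map_poly cnj (monomial_poly n k) = monomial_poly n (n - k)"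
proof -
  have "poly (map_poly cnj (monomial_poly n k)) x = poly (monomial_poly n (n - k)) x" for x
  proof -
    have "poly (map_poly cnj (monomial_poly n k)) x
            = (\<Prod>m\<in>{1..n}. - \<i> * (1/2 + of_nat k - of_nat m) + x)"
      by (simp add: poly_cnj[symmetric] poly_monomial_poly)
    also have "\<dots> = (\<Prod>m\<in>{1..n}. \<i> * (1/2 + of_nat (n - k) - of_nat (n + 1 - m)) + x)"
      using assms by (intro prod.cong) (auto simp: of_nat_diff algebra_simps)
    also have "\<dots> = poly (monomial_poly n (n - k)) x"
      unfolding poly_monomial_poly by (rule prod.atLeastAtMost_rev[symmetric])
    finally show ?thesis .
  qed
  then show ?thesis
    by (simp add: poly_eq_poly_eq_iff[symmetric] fun_eq_iff)
qed

lemma map_poly_cnj_monomial_expansion: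
  "map_poly cnj (\<Sum>k\<le>n. smult (a k) (monomial_poly n k))
     = (\<Sum>k\<le>n. smult (cnj (a (n - k))) (monomial_poly n k))"
proof -
  have "map_poly cnj (\<Sum>k\<le>n. smult (a k) (monomial_poly n k))
          = (\<Sum>k\<le>n. smult (cnj (a k)) (monomial_poly n (n - k)))"
    by (simp add: poly_eq_iff coeff_map_poly coeff_sum map_poly_cnj_monomial_poly[symmetric])
  also have "\<dots> = (\<Sum>k\<le>n. smult (cnj (a (n - k))) (monomial_poly n k))"
    by (rule sum.reindex_bij_witness[of _ "\<lambda>k. n - k" "\<lambda>k. n - k"]) auto
  finally show ?thesis .
qed

lemma triangular_combination_eq_0:
  fixes d :: "nat \<Rightarrow> 'a::idom"
  assumes comb: "\<And>j. j \<le> n \<Longrightarrow> (\<Sum>k\<le>n. d k * M k j) = 0"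
    and below: "\<And>j k. j < k \<Longrightarrow> k \<le> n \<Longrightarrow> M k j = 0"
    and diag: "\<And>k. k \<le> n \<Longrightarrow> M k k \<noteq> 0"
  shows "k \<le> n \<Longrightarrow> d k = 0"
proof (induction k rule: less_induct)
  case (less k)
  have "(\<Sum>i\<in>{..n} - {k}. d i * M i k) = 0"
  proof (rule sum.neutral, rule ballI)
    fix i assume "i \<in> {..n} - {k}"
    then consider "i < k" | "k < i" "i \<le> n" by force
    then show "d i * M i k = 0"
      by cases (use less below in auto)
  qed
  then have "d k * M k k = 0"
    using comb[of k] less.prems by (simp add: sum.remove[of _ k])
  then show "d k = 0"
    using diag less.prems by simp
qed

lemma monomial_poly_combination_eq_0_iff:
  "(\<Sum>k\<le>n. smult (d k) (monomial_poly n k)) = 0 \<longleftrightarrow> (\<forall>k\<le>n. d k = 0)"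
proof
  assume "(\<Sum>k\<le>n. smult (d k) (monomial_poly n k)) = 0"
  then have "(\<Sum>k\<le>n. d k * poly (monomial_poly n k) (z_eigenvalue j)) = 0" for j
    using poly_sum[of "\<lambda>k. smult (d k) (monomial_poly n k)" "{..n}" "z_eigenvalue j"] by simp
  then show "\<forall>k\<le>n. d k = 0"
    using triangular_combination_eq_0[of n d "\<lambda>k j. poly (monomial_poly n k) (z_eigenvalue j)",
        OF _ monomial_poly_vanishes_below monomial_poly_nonzero_diagonal]
    by blast
qed simp

theorem theorem4p3:
  fixes n :: nat and a :: "nat \<Rightarrow> complex" and P :: "complex poly"
  assumes "is_assoc_poly n a P"
  shows "(\<forall>r. coeff P r \<in> \<real>) \<longleftrightarrow> (\<forall>k\<le>n. a k = cnj (a (n - k)))"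
proof -
  have P: "P = (\<Sum>k\<le>n. smult (a k) (monomial_poly n k))"
    using assms by (rule assoc_poly_expansion)
  have "P - map_poly cnj P = (\<Sum>k\<le>n. smult (a k - cnj (a (n - k))) (monomial_poly n k))"
    unfolding smult_diff_left sum_subtractf
    by (subst (1 2) P) (simp only: map_poly_cnj_monomial_expansion)
  moreover have "(\<forall>r. coeff P r \<in> \<real>) \<longleftrightarrow> P - map_poly cnj P = 0"
    by (auto simp: poly_eq_iff coeff_map_poly Reals_cnj_iff)
  ultimately have "(\<forall>r. coeff P r \<in> \<real>) \<longleftrightarrow> (\<forall>k\<le>n. a k - cnj (a (n - k)) = 0)"
    by (simp only: monomial_poly_combination_eq_0_iff)
  then show ?thesis
    by simp
qed

end
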